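(* Let $G$ and $H$ be connected graphs of orders $m$ and $n\geq 2$, respectively, with $\mathrm{ldim}_f(H)=\frac{n}{2}$. Then $\mathrm{ldim}_f(G\square H)\geq \frac{n}{2}$.
   Context: All graphs are finite, simple and connected; $d$ is the shortest-path distance. For an edge $uv$ of a graph $X$, $L_X(uv)=\{x\in V(X): d_X(u,x)\neq d_X(v,x)\}$. A function $f:V(X)\to[0,1]$ is a local resolving function of $X$ if $\sum_{x\in L_X(uv)}f(x)\geq 1$ for every edge $uv$; $\mathrm{ldim}_f(X)$ is the minimum of $\sum_{v}f(v)$ over all local resolving functions. The Cartesian product $G\square H$ has vertex set $V(G)\times V(H)$, with $(u_1,v_1)$ adjacent to $(u_2,v_2)$ iff ($u_1u_2\in E(G)$ and $v_1=v_2$) or ($u_1=u_2$ and $v_1v_2\in E(H)$). *)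

theory Defs
  imports Complex_Main
begin

definition simple_graph :: "'a set \<Rightarrow> 'a set set \<Rightarrow> bool" where
  "simple_graph V E \<longleftrightarrow> finite V \<and> V \<noteq> {} \<and>
     (\<forall>e\<in>E. \<exists>u v. e = {u, v} \<and> u \<in> V \<and> v \<in> V \<and> u \<noteq> v)"

definition is_walk :: "'a set \<Rightarrow> 'a set set \<Rightarrow> 'a list \<Rightarrow> bool" where
  "is_walk V E p \<longleftrightarrow> p \<noteq> [] \<and> set p \<subseteq> V \<and>
     (\<forall>i. Suc i < length p \<longrightarrow> {p ! i, p ! Suc i} \<in> E)"

definition walk_betw :: "'a set \<Rightarrow> 'a set set \<Rightarrow> 'a \<Rightarrow> nat \<Rightarrow> 'a \<Rightarrow> bool" where
  "walk_betw V E u k v \<longleftrightarrow>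
     (\<exists>p. is_walk V E p \<and> hd p = u \<and> last p = v \<and> length p = Suc k)"

definition connected_graph :: "'a set \<Rightarrow> 'a set set \<Rightarrow> bool" where
  "connected_graph V E \<longleftrightarrow> simple_graph V E \<and>
     (\<forall>u\<in>V. \<forall>v\<in>V. \<exists>k. walk_betw V E u k v)"

text \<open>Shortest-path distance (meaningful for connected graphs).\<close>

definition gdist :: "'a set \<Rightarrow> 'a set set \<Rightarrow> 'a \<Rightarrow> 'a \<Rightarrow> nat" where
  "gdist V E u v = (LEAST k. walk_betw V E u k v)"

definition resolving_set_of_edge :: "'a set \<Rightarrow> 'a set set \<Rightarrow> 'a \<Rightarrow> 'a \<Rightarrow> 'a set" where
  "resolving_set_of_edge V E u v = {x \<in> V. gdist V E u x \<noteq> gdist V E v x}"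

definition local_resolving_function :: "'a set \<Rightarrow> 'a set set \<Rightarrow> ('a \<Rightarrow> real) \<Rightarrow> bool" where
  "local_resolving_function V E f \<longleftrightarrow>
     (\<forall>x\<in>V. 0 \<le> f x \<and> f x \<le> 1) \<and>
     (\<forall>u v. {u, v} \<in> E \<longrightarrow> (\<Sum>x\<in>resolving_set_of_edge V E u v. f x) \<ge> 1)"

text \<open>Fractional local metric dimension: minimum (here infimum; the minimum is
  attained, being a linear program) of the total weight.\<close>

definition ldim_f :: "'a set \<Rightarrow> 'a set set \<Rightarrow> real" where
  "ldim_f V E = Inf {(\<Sum>x\<in>V. f x) | f. local_resolving_function V E f}"

definition cart_vertices :: "'a set \<Rightarrow> 'b set \<Rightarrow> ('a \<times> 'b) set" where
  "cart_vertices VG VH = VG \<times> VH"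

definition cart_edges ::
  "'a set \<Rightarrow> 'a set set \<Rightarrow> 'b set \<Rightarrow> 'b set set \<Rightarrow> ('a \<times> 'b) set set" where
  "cart_edges VG EG VH EH =
     {{(u1, v), (u2, v)} | u1 u2 v. {u1, u2} \<in> EG \<and> v \<in> VH} \<union>
     {{(u, v1), (u, v2)} | u v1 v2. u \<in> VG \<and> {v1, v2} \<in> EH}"

end

theory Submission
  imports Defs
begin

text \<open>Distances in $G \square H$ add up: $d((u,v),(x,y)) = d_G(u,x) + d_H(v,y)$, since a walk
  in the product projects to walks in the factors and walks in the factors can be
  concatenated along a fibre. Hence an edge $(u,v_1)(u,v_2)$ of an $H$-fibre is resolved
  by $(x,y)$ exactly when $y$ resolves $v_1 v_2$ in $H$. Given a local resolving function
  $f$ of $G \square H$, the function $y \mapsto \min(1, \sum_x f(x,y))$ is therefore a local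
  resolving function of $H$ of total weight at most $\sum f$, so
  $\mathrm{ldim}_f(H) \le \mathrm{ldim}_f(G \square H)$.\<close>

inductive walk :: "'a set \<Rightarrow> 'a set set \<Rightarrow> 'a \<Rightarrow> nat \<Rightarrow> 'a \<Rightarrow> bool" for V E where
  walk_Nil: "u \<in> V \<Longrightarrow> walk V E u 0 u"
| walk_Cons: "u \<in> V \<Longrightarrow> {u, w} \<in> E \<Longrightarrow> walk V E w k v \<Longrightarrow> walk V E u (Suc k) v"

lemma is_walk_imp_walk: "is_walk V E p \<Longrightarrow> walk V E (hd p) (length p - 1) (last p)"
proof (induction p)
  case Nil
  then show ?case by (simp add: is_walk_def)
next
  case (Cons a p)
  show ?case
  proof (cases "p = []")
    case True
    then show ?thesis using Cons.prems by (auto simp: is_walk_def intro: walk_Nil)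
  next
    case False
    have "is_walk V E p" using Cons.prems False unfolding is_walk_def
      by (metis Suc_less_eq length_Cons nth_Cons_Suc set_subset_Cons subset_trans)
    moreover have "{a, hd p} \<in> E" using Cons.prems False unfolding is_walk_def
      by (metis hd_conv_nth length_Cons length_greater_0_conv nth_Cons_0 nth_Cons_Suc
          Suc_less_eq)
    moreover have "a \<in> V" using Cons.prems unfolding is_walk_def by auto
    ultimately have "walk V E a (Suc (length p - 1)) (last p)"
      using Cons.IH by (blast intro: walk_Cons)
    then show ?thesis using False by simp
  qed
qed

lemma walk_imp_walk_betw: "walk V E u k v \<Longrightarrow> walk_betw V E u k v"
proof (induction rule: walk.induct)
  case (walk_Nil u)
  then show ?case unfolding walk_betw_def is_walk_def by (intro exI[of _ "[u]"]) auto
next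
  case (walk_Cons u w k v)
  then obtain p where p: "is_walk V E p" "hd p = w" "last p = v" "length p = Suc k"
    unfolding walk_betw_def by blast
  have "is_walk V E (u # p)"
    unfolding is_walk_def
  proof (intro conjI allI impI)
    show "set (u # p) \<subseteq> V" using p(1) walk_Cons(1) unfolding is_walk_def by auto
    fix i assume "Suc i < length (u # p)"
    then show "{(u # p) ! i, (u # p) ! Suc i} \<in> E"
      using p walk_Cons(2) by (cases i) (auto simp: hd_conv_nth is_walk_def)
  qed simp
  then show ?case unfolding walk_betw_def using p
    by (intro exI[of _ "u # p"]) (auto simp: is_walk_def)
qed

lemma walk_betw_iff_walk: "walk_betw V E u k v \<longleftrightarrow> walk V E u k v"
  using is_walk_imp_walk walk_imp_walk_betw unfolding walk_betw_def by fastforce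

lemma walk_zeroD: "walk V E u 0 v \<Longrightarrow> u = v"
  by (erule walk.cases) auto

lemma walk_endpoints: "walk V E u k v \<Longrightarrow> u \<in> V \<and> v \<in> V"
  by (induction rule: walk.induct) auto

lemma gdist_walk: "walk V E u k v \<Longrightarrow> walk V E u (gdist V E u v) v"
  unfolding gdist_def walk_betw_iff_walk[symmetric] by (rule LeastI)

lemma gdist_le_walk: "walk V E u k v \<Longrightarrow> gdist V E u v \<le> k"
  unfolding gdist_def walk_betw_iff_walk[symmetric] by (rule Least_le)

lemma gdist_self: "u \<in> V \<Longrightarrow> gdist V E u u = 0"
  using gdist_le_walk[OF walk_Nil] by simp

lemma gdist_neq_0: "{u, v} \<in> E \<Longrightarrow> u \<in> V \<Longrightarrow> v \<in> V \<Longrightarrow> u \<noteq> v \<Longrightarrow> gdist V E u v \<noteq> 0"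
  using gdist_walk[OF walk_Cons[OF _ _ walk_Nil]] walk_zeroD by metis

lemma simple_graph_edgeD:
  assumes "simple_graph V E" "{a, b} \<in> E"
  shows "a \<in> V" "b \<in> V" "a \<noteq> b"
  using assms unfolding simple_graph_def by (auto simp: doubleton_eq_iff)

lemma connected_graph_walk:
  "connected_graph V E \<Longrightarrow> u \<in> V \<Longrightarrow> v \<in> V \<Longrightarrow> \<exists>k. walk V E u k v"
  unfolding connected_graph_def walk_betw_iff_walk by blast

lemma cart_edges_cases:
  assumes "{(u, v), (u', v')} \<in> cart_edges VG EG VH EH"
  obtains "v = v'" "{u, u'} \<in> EG" | "u = u'" "{v, v'} \<in> EH"
  using assms unfolding cart_edges_def by (auto simp: doubleton_eq_iff insert_commute)

lemma simple_graph_cart: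
  assumes "simple_graph VG EG" "simple_graph VH EH"
  shows "simple_graph (cart_vertices VG VH) (cart_edges VG EG VH EH)"
  unfolding simple_graph_def[of "cart_vertices VG VH"]
proof (intro conjI ballI)
  show "finite (cart_vertices VG VH)" "cart_vertices VG VH \<noteq> {}"
    using assms unfolding simple_graph_def cart_vertices_def by auto
  fix e assume "e \<in> cart_edges VG EG VH EH"
  then consider (G) u1 u2 v where "e = {(u1, v), (u2, v)}" "{u1, u2} \<in> EG" "v \<in> VH"
    | (H) u v1 v2 where "e = {(u, v1), (u, v2)}" "u \<in> VG" "{v1, v2} \<in> EH"
    unfolding cart_edges_def by blast
  then show "\<exists>p q. e = {p, q} \<and> p \<in> cart_vertices VG VH \<and> q \<in> cart_vertices VG VH \<and> p \<noteq> q"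
  proof cases
    case G
    then show ?thesis using simple_graph_edgeD[OF assms(1) G(2)] by (auto simp: cart_vertices_def)
  next
    case H
    then show ?thesis using simple_graph_edgeD[OF assms(2) H(3)] by (auto simp: cart_vertices_def)
  qed
qed

lemma walk_cart_fibre:
  assumes "walk VH EH v b y" "x \<in> VG"
  shows "walk (cart_vertices VG VH) (cart_edges VG EG VH EH) (x, v) b (x, y)"
  using assms(1)
proof (induction rule: walk.induct)
  case (walk_Nil v)
  then show ?case using assms(2) by (intro walk.walk_Nil) (simp add: cart_vertices_def)
next
  case (walk_Cons u w k v)
  have "{(x, u), (x, w)} \<in> cart_edges VG EG VH EH"
    unfolding cart_edges_def using walk_Cons(2) assms(2) by blast
  then show ?case using walk_Cons assms(2) by (intro walk.walk_Cons) (auto simp: cart_vertices_def)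
qed

lemma walk_cart:
  assumes "walk VG EG u a x" "walk VH EH v b y"
  shows "walk (cart_vertices VG VH) (cart_edges VG EG VH EH) (u, v) (a + b) (x, y)"
  using assms(1)
proof (induction rule: walk.induct)
  case (walk_Nil u)
  then show ?case using walk_cart_fibre[OF assms(2)] by simp
next
  case (walk_Cons u w k x)
  have "v \<in> VH" using walk_endpoints[OF assms(2)] by blast
  then have "{(u, v), (w, v)} \<in> cart_edges VG EG VH EH"
    unfolding cart_edges_def using walk_Cons(2) by blast
  then show ?case using walk_Cons \<open>v \<in> VH\<close> by (auto simp: cart_vertices_def intro: walk.walk_Cons)
qed

lemma walk_cartD:
  assumes "walk (cart_vertices VG VH) (cart_edges VG EG VH EH) p k q"
  shows "\<exists>a b. a + b = k \<and> walk VG EG (fst p) a (fst q) \<and> walk VH EH (snd p) b (snd q)"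
  using assms
proof (induction rule: walk.induct)
  case (walk_Nil u)
  then show ?case by (auto simp: cart_vertices_def intro!: walk.walk_Nil)
next
  case (walk_Cons p w k q)
  obtain a b where ab: "a + b = k" "walk VG EG (fst w) a (fst q)" "walk VH EH (snd w) b (snd q)"
    using walk_Cons.IH by blast
  have pV: "fst p \<in> VG" "snd p \<in> VH" using walk_Cons(1) by (auto simp: cart_vertices_def)
  have "{(fst p, snd p), (fst w, snd w)} \<in> cart_edges VG EG VH EH" using walk_Cons(2) by simp
  then show ?case
  proof (cases rule: cart_edges_cases)
    case 1
    then show ?thesis using ab pV by (intro exI[of _ "Suc a"] exI[of _ b]) (auto intro: walk.walk_Cons)
  next
    case 2
    then show ?thesis using ab pV by (intro exI[of _ a] exI[of _ "Suc b"]) (auto intro: walk.walk_Cons)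
  qed
qed

lemma gdist_cart:
  assumes "connected_graph VG EG" "connected_graph VH EH"
    and "u \<in> VG" "x \<in> VG" "v \<in> VH" "y \<in> VH"
  shows "gdist (cart_vertices VG VH) (cart_edges VG EG VH EH) (u, v) (x, y)
         = gdist VG EG u x + gdist VH EH v y"
    (is "?d = _")
proof (rule antisym)
  obtain a b where "walk VG EG u a x" "walk VH EH v b y"
    using connected_graph_walk assms by metis
  then show "?d \<le> gdist VG EG u x + gdist VH EH v y"
    by (intro gdist_le_walk walk_cart gdist_walk)
  then have "walk (cart_vertices VG VH) (cart_edges VG EG VH EH) (u, v) ?d (x, y)"
    using \<open>walk VG EG u a x\<close> \<open>walk VH EH v b y\<close> by (blast intro: gdist_walk walk_cart)
  then obtain a' b' where "a' + b' = ?d" "walk VG EG u a' x" "walk VH EH v b' y"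
    using walk_cartD by fastforce
  then show "gdist VG EG u x + gdist VH EH v y \<le> ?d"
    using gdist_le_walk by (metis add_mono)
qed

lemma resolving_set_of_edge_cart_fibre:
  assumes "connected_graph VG EG" "connected_graph VH EH"
    and "u \<in> VG" "{v1, v2} \<in> EH"
  shows "resolving_set_of_edge (cart_vertices VG VH) (cart_edges VG EG VH EH) (u, v1) (u, v2)
         \<subseteq> VG \<times> resolving_set_of_edge VH EH v1 v2"
proof
  fix z assume z: "z \<in> resolving_set_of_edge (cart_vertices VG VH) (cart_edges VG EG VH EH)
    (u, v1) (u, v2)"
  obtain x y where xy: "z = (x, y)" "x \<in> VG" "y \<in> VH"
    using z by (auto simp: resolving_set_of_edge_def cart_vertices_def)
  have "simple_graph VH EH" using assms(2) by (simp add: connected_graph_def)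
  with z xy have "gdist VH EH v1 y \<noteq> gdist VH EH v2 y"
    using gdist_cart[OF assms(1,2,3) \<open>x \<in> VG\<close>] simple_graph_edgeD[OF _ assms(4)]
    by (simp add: resolving_set_of_edge_def)
  with xy show "z \<in> VG \<times> resolving_set_of_edge VH EH v1 v2"
    by (simp add: resolving_set_of_edge_def)
qed

lemma mem_resolving_set_of_edge:
  assumes "simple_graph V E" "{u, v} \<in> E"
  shows "u \<in> resolving_set_of_edge V E u v"
proof -
  have "{v, u} \<in> E" using assms(2) by (simp add: insert_commute)
  then show ?thesis
    using simple_graph_edgeD[OF assms] gdist_self[of u V E] gdist_neq_0[of v u E V]
    by (auto simp: resolving_set_of_edge_def)
qed

lemma local_resolving_function_one:
  assumes "simple_graph V E"
  shows "local_resolving_function V E (\<lambda>_. 1)"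
  unfolding local_resolving_function_def
proof (intro conjI ballI allI impI)
  fix u v assume "{u, v} \<in> E"
  moreover have "finite (resolving_set_of_edge V E u v)"
    using assms unfolding simple_graph_def resolving_set_of_edge_def by simp
  ultimately have "resolving_set_of_edge V E u v \<noteq> {}" "finite (resolving_set_of_edge V E u v)"
    using mem_resolving_set_of_edge[OF assms] by blast+
  then show "1 \<le> (\<Sum>x\<in>resolving_set_of_edge V E u v. 1::real)"
    by (simp add: Suc_le_eq card_gt_0_iff)
qed auto

lemma ldim_f_le:
  assumes "local_resolving_function V E f"
  shows "ldim_f V E \<le> (\<Sum>x\<in>V. f x)"
  unfolding ldim_f_def
proof (rule cInf_lower)
  show "bdd_below {sum f V |f. local_resolving_function V E f}"
    unfolding bdd_below_def local_resolving_function_def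
    by (intro exI[of _ 0]) (auto intro: sum_nonneg)
qed (use assms in blast)

lemma ldim_f_greatest:
  assumes "simple_graph V E"
    and "\<And>f. local_resolving_function V E f \<Longrightarrow> c \<le> (\<Sum>x\<in>V. f x)"
  shows "c \<le> ldim_f V E"
  unfolding ldim_f_def
  using local_resolving_function_one[OF assms(1)] assms(2) by (intro cInf_greatest) auto

lemma local_resolving_function_cart_projection:
  assumes "connected_graph VG EG" "connected_graph VH EH"
    and f: "local_resolving_function (cart_vertices VG VH) (cart_edges VG EG VH EH) f"
  shows "local_resolving_function VH EH (\<lambda>y. min 1 (\<Sum>x\<in>VG. f (x, y)))"
    (is "local_resolving_function VH EH ?g")
  unfolding local_resolving_function_def
proof (intro conjI ballI allI impI)
  have f0: "0 \<le> f z" if "z \<in> VG \<times> VH" for z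
    using f that unfolding local_resolving_function_def cart_vertices_def by auto
  then show g0: "0 \<le> ?g y" if "y \<in> VH" for y
    using that by (auto intro!: sum_nonneg)
  show "?g y \<le> 1" for y by simp
  fix v1 v2 assume e: "{v1, v2} \<in> EH"
  let ?L = "resolving_set_of_edge VH EH v1 v2"
  have finG: "finite VG" "VG \<noteq> {}" and finL: "finite ?L" and LV: "?L \<subseteq> VH"
    using assms(1,2) unfolding connected_graph_def simple_graph_def resolving_set_of_edge_def
    by auto
  then obtain u where u: "u \<in> VG" by blast
  have "{(u, v1), (u, v2)} \<in> cart_edges VG EG VH EH" unfolding cart_edges_def using u e by blast
  then have "1 \<le> (\<Sum>z\<in>resolving_set_of_edge (cart_vertices VG VH) (cart_edges VG EG VH EH)
      (u, v1) (u, v2). f z)"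
    using f unfolding local_resolving_function_def by blast
  also have "\<dots> \<le> (\<Sum>z\<in>VG \<times> ?L. f z)"
    using resolving_set_of_edge_cart_fibre[OF assms(1,2) u e] finG finL LV f0
    by (intro sum_mono2) auto
  also have "\<dots> = (\<Sum>x\<in>VG. \<Sum>y\<in>?L. f (x, y))"
    using sum.cartesian_product[of "\<lambda>x y. f (x, y)" ?L VG] by simp
  also have "\<dots> = (\<Sum>y\<in>?L. \<Sum>x\<in>VG. f (x, y))"
    by (rule sum.swap)
  finally have sum_ge: "1 \<le> (\<Sum>y\<in>?L. \<Sum>x\<in>VG. f (x, y))" .
  show "1 \<le> (\<Sum>y\<in>?L. ?g y)"
  proof (cases "\<exists>y\<in>?L. 1 \<le> (\<Sum>x\<in>VG. f (x, y))")
    case True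
    then obtain y where "y \<in> ?L" "?g y = 1" by auto
    moreover have "?g y \<le> (\<Sum>y\<in>?L. ?g y)"
      using \<open>y \<in> ?L\<close> finL g0 LV by (intro member_le_sum) auto
    ultimately show ?thesis by simp
  next
    case False
    then show ?thesis using sum_ge by (simp add: not_le)
  qed
qed

lemma ldim_f_le_ldim_f_cart:
  assumes "connected_graph VG EG" "connected_graph VH EH"
  shows "ldim_f VH EH \<le> ldim_f (cart_vertices VG VH) (cart_edges VG EG VH EH)"
proof (rule ldim_f_greatest)
  show "simple_graph (cart_vertices VG VH) (cart_edges VG EG VH EH)"
    using assms by (intro simple_graph_cart) (auto simp: connected_graph_def)
  fix f assume f: "local_resolving_function (cart_vertices VG VH) (cart_edges VG EG VH EH) f"
  have "ldim_f VH EH \<le> (\<Sum>y\<in>VH. min 1 (\<Sum>x\<in>VG. f (x, y)))"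
    by (rule ldim_f_le[OF local_resolving_function_cart_projection[OF assms f]])
  also have "\<dots> \<le> (\<Sum>y\<in>VH. \<Sum>x\<in>VG. f (x, y))"
    by (intro sum_mono) simp
  also have "\<dots> = (\<Sum>x\<in>VG. \<Sum>y\<in>VH. f (x, y))"
    by (rule sum.swap)
  also have "\<dots> = (\<Sum>z\<in>cart_vertices VG VH. f z)"
    using sum.cartesian_product[of "\<lambda>x y. f (x, y)" VH VG] by (simp add: cart_vertices_def)
  finally show "ldim_f VH EH \<le> (\<Sum>z\<in>cart_vertices VG VH. f z)" .
qed

theorem theorem3p11:
  fixes VG :: "'a set" and EG :: "'a set set" and VH :: "'b set" and EH :: "'b set set"
    and m n :: nat
  assumes "connected_graph VG EG" and "connected_graph VH EH"
    and "card VG = m" and "card VH = n" and "n \<ge> 2"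
    and "ldim_f VH EH = real n / 2"
  shows "ldim_f (cart_vertices VG VH) (cart_edges VG EG VH EH) \<ge> real n / 2"
  \<comment> \<open>Only the value of \<open>ldim_f VH EH\<close> matters.\<close>
  using ldim_f_le_ldim_f_cart[OF assms(1,2)] assms(6) by simp

end
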